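(* Let $d_1,\dots,d_n$ be positive integers and let $b,a_1,\dots,a_n\in\mathbb{F}_q^*$. Let $$N^*=\#\{(x_1,\dots,x_n)\in(\mathbb{F}_q^* )^n : a_1x_1^{d_1}+\cdots+a_nx_n^{d_n}=b\}.$$ Then $$\left|N^*-\frac1q\big[(q-1)^n-(-1)^n\big]\right|\le\sum_{e=0}^{n-1}\ \sum_{1\le i_{e+1}<i_{e+2}<\cdots<i_n\le n}\ \prod_{j=e+1}^n(d_{i_j}-1)\,\sqrt q^{\,n-e-1}.$$ *)

theory Defs
  imports Complex_Main "HOL-Library.FuncSet" "HOL-Library.Cardinality"
begin

definition Nstar :: "nat \<Rightarrow> (nat \<Rightarrow> nat) \<Rightarrow> (nat \<Rightarrow> 'a::{field,finite}) \<Rightarrow> 'a \<Rightarrow> nat" where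
  "Nstar n d a b = card {x \<in> {1..n} \<rightarrow>\<^sub>E (UNIV - {0}). (\<Sum>i=1..n. a i * x i ^ d i) = b}"

end

theory Submission
  imports Defs "HOL-Algebra.Algebraic_Closure_Type" "HOL-Library.Real_Mod"
begin

(*
  Fix a nontrivial additive character psi of F = F_q. Orthogonality of psi gives
    q N* = sum_t psi(-t b) prod_i sum_{x /= 0} psi(t a_i x^(d_i)).
  The term t = 0 is (q - 1)^n. For t /= 0, counting d-th roots with the multiplicative characters chi
  satisfying chi^d = 1 turns the inner sum into -1 + sum_{chi /= 1, chi^d = 1} chi(t a_i) G(chi), with
  Gauss sums G(chi) of absolute value at most sqrt q. Expanding the product over the subsets S of the
  indices, the empty set contributes -(-1)^n, and for S nonempty the remaining sum over t is again a
  Gauss sum, of the character prod_{i in S} chi_i; so each of the at most prod_{i in S} (d_i - 1)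
  character tuples contributes at most sqrt q ^ (|S| + 1).
*)

definition unity_root :: "nat \<Rightarrow> int \<Rightarrow> complex" where
  "unity_root N m = cis (2 * pi * of_int m / of_nat N)"

lemma norm_unity_root [simp]: "norm (unity_root N m) = 1"
  by (simp add: unity_root_def)

lemma unity_root_0 [simp]: "unity_root N 0 = 1"
  by (simp add: unity_root_def)

lemma unity_root_add: "unity_root N (a + b) = unity_root N a * unity_root N b"
  by (simp add: unity_root_def cis_mult add_divide_distrib distrib_left)

lemma unity_root_eq_1_iff:
  assumes "N > 0"
  shows "unity_root N m = 1 \<longleftrightarrow> int N dvd m"
proof -
  have "2 * pi * of_int m / of_nat N = of_int k * (2 * pi) \<longleftrightarrow> m = k * int N" for k
  proof -
    have "2 * pi * of_int m / of_nat N = of_int k * (2 * pi) \<longleftrightarrow> real_of_int m = of_int k * of_nat N"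
      using assms pi_gt_zero by (auto simp: field_simps)
    also have "\<dots> \<longleftrightarrow> m = k * int N"
      by (metis of_int_eq_iff of_int_mult of_int_of_nat_eq)
    finally show ?thesis .
  qed
  then show ?thesis
    unfolding unity_root_def cis_eq_1_iff by (auto simp: dvd_def mult.commute)
qed

lemma unity_root_eq_iff:
  assumes "N > 0"
  shows "unity_root N a = unity_root N b \<longleftrightarrow> int N dvd a - b"
proof -
  have "unity_root N a = unity_root N (a - b) * unity_root N b"
    by (simp flip: unity_root_add)
  moreover have "unity_root N b \<noteq> 0"
    using norm_unity_root[of N b] by (metis norm_zero zero_neq_one)
  ultimately show ?thesis
    using unity_root_eq_1_iff[OF assms, of "a - b"] by auto
qed

lemma unity_root_mult_of_nat: "unity_root N (int d * m) = unity_root N m ^ d"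
  by (induction d) (simp_all add: algebra_simps unity_root_add)

lemma sum_unity_root:
  assumes "N > 0"
  shows "(\<Sum>j<N. unity_root N (m * int j)) = (if int N dvd m then of_nat N else 0)"
proof -
  have pow: "unity_root N (m * int j) = unity_root N m ^ j" for j
    by (simp add: mult.commute flip: unity_root_mult_of_nat)
  show ?thesis
  proof (cases "int N dvd m")
    case True
    then show ?thesis
      using assms unity_root_eq_1_iff[OF assms, of m] by (simp add: pow)
  next
    case False
    have "unity_root N m ^ N = 1"
      using assms by (simp flip: pow add: unity_root_eq_1_iff)
    with False show ?thesis
      using assms by (simp add: pow unity_root_eq_1_iff sum_gp_strict)
  qed
qed

lemma unimodular_mult_cnj: "norm (z::complex) = 1 \<Longrightarrow> z * cnj z = 1"
  by (metis complex_norm_square of_real_1 power_one)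

lemma unimodular_inverse_eq_cnj: "norm (z::complex) = 1 \<Longrightarrow> z * w = 1 \<Longrightarrow> w = cnj z"
  by (metis mult.left_commute mult_1_right unimodular_mult_cnj)

lemma card_field_ge_2: "CARD('a::{field,finite}) \<ge> 2"
proof -
  have "card {0::'a, 1} \<le> CARD('a)" by (rule card_mono) auto
  then show ?thesis by simp
qed

lemma nat_pow_ring_of_type_algebra: "x [^]\<^bsub>ring_of_type_algebra\<^esub> (n::nat) = x ^ n"
  by (induction n) (simp_all add: ring_of_type_algebra_def power_commutes)

lemma finite_field_power_card_minus_1:
  assumes "(x::'a::{field,finite}) \<noteq> 0"
  shows "x ^ (CARD('a) - 1) = 1"
proof -
  let ?R = "ring_of_type_algebra :: 'a ring"
  let ?G = "Multiplicative_Group.mult_of ?R"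
  have G: "group ?G"
    by (rule field.field_mult_group[OF field_from_type_algebra])
  have "x \<in> carrier ?G"
    using assms by (simp add: ring_of_type_algebra_def)
  moreover have "Coset.order ?G = CARD('a) - 1"
    by (simp add: Coset.order_def ring_of_type_algebra_def card_Diff_singleton)
  ultimately have "x [^]\<^bsub>?R\<^esub> (CARD('a) - 1) = \<one>\<^bsub>?R\<^esub>"
    using group.pow_order_eq_1[OF G] by (simp add: Multiplicative_Group.nat_pow_mult_of)
  then show ?thesis
    by (simp add: nat_pow_ring_of_type_algebra) (simp add: ring_of_type_algebra_def)
qed

lemma finite_field_power_mod:
  assumes "(x::'a::{field,finite}) \<noteq> 0"
  shows "x ^ (j mod (CARD('a) - 1)) = x ^ j"
proof -
  have "x ^ j = x ^ ((CARD('a) - 1) * (j div (CARD('a) - 1)) + j mod (CARD('a) - 1))"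
    by simp
  also have "\<dots> = x ^ (j mod (CARD('a) - 1))"
    by (simp only: power_add power_mult finite_field_power_card_minus_1[OF assms] power_one mult_1)
  finally show ?thesis ..
qed

lemma finite_field_cyclic:
  "\<exists>g::'a::{field,finite}. g \<noteq> 0 \<and> (\<forall>x. x \<noteq> 0 \<longrightarrow> (\<exists>i. x = g ^ i))"
proof -
  let ?R = "ring_of_type_algebra :: 'a ring"
  have carrier: "carrier (Multiplicative_Group.mult_of ?R) = UNIV - {0}"
    by (simp add: ring_of_type_algebra_def)
  have "finite (carrier ?R)"
    by simp
  then obtain g where g_mem: "g \<in> carrier (Multiplicative_Group.mult_of ?R)"
    and g_gen: "carrier (Multiplicative_Group.mult_of ?R) = {g [^]\<^bsub>?R\<^esub> i | i::nat. i \<in> UNIV}"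
    using field.finite_field_mult_group_has_gen[OF field_from_type_algebra] by blast
  have "g \<noteq> 0"
    using g_mem unfolding carrier by simp
  moreover have "UNIV - {0} = {g ^ i | i::nat. i \<in> UNIV}"
    using g_gen unfolding carrier nat_pow_ring_of_type_algebra .
  ultimately show ?thesis
    by blast
qed

lemma finite_field_of_int_inverse:
  assumes "(of_int m :: 'a::{field,finite}) \<noteq> 0"
  shows "\<exists>m'. of_int m' * (of_int m :: 'a) = 1"
proof -
  let ?P = "range (of_int :: int \<Rightarrow> 'a)"
  have "(\<lambda>y. y * of_int m) ` ?P \<subseteq> ?P"
    by (auto simp flip: of_int_mult)
  moreover have "inj_on (\<lambda>y. y * of_int m) ?P"
    using assms by (intro inj_onI) simp
  ultimately have "(\<lambda>y. y * of_int m) ` ?P = ?P"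
    by (intro endo_inj_surj) simp_all
  moreover have "1 \<in> ?P"
    by (metis of_int_1 rangeI)
  ultimately show ?thesis
    by (metis (no_types, lifting) imageE rangeE)
qed

definition add_subgroup :: "'a::ab_group_add set \<Rightarrow> bool" where
  "add_subgroup H \<longleftrightarrow> 0 \<in> H \<and> (\<forall>x\<in>H. \<forall>y\<in>H. x + y \<in> H) \<and> (\<forall>x\<in>H. - x \<in> H)"

lemma add_subgroup_diff:
  "add_subgroup H \<Longrightarrow> x \<in> H \<Longrightarrow> y \<in> H \<Longrightarrow> x - y \<in> H"
  unfolding add_subgroup_def by (metis diff_conv_add_uminus)

lemma add_subgroup_of_int_mult:
  assumes H: "add_subgroup H" and x: "x \<in> H"
  shows "of_int k * (x :: 'a::ring_1) \<in> H"
proof -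
  have nat: "of_nat n * x \<in> H" for n
    using H x by (induction n) (simp_all add: add_subgroup_def distrib_right)
  show ?thesis
  proof (cases "k \<ge> 0")
    case True
    then show ?thesis using nat[of "nat k"] by simp
  next
    case False
    then have "of_int k * x = - (of_nat (nat (- k)) * x)" by simp
    then show ?thesis using nat H by (simp add: add_subgroup_def)
  qed
qed

lemma add_subgroup_extend:
  assumes H: "add_subgroup H"
  shows "add_subgroup {h + of_int k * (x :: 'a::ring_1) | h k. h \<in> H}"
  unfolding add_subgroup_def
proof safe
  show "\<exists>h k. 0 = h + of_int k * x \<and> h \<in> H"
    using H by (intro exI[of _ 0] exI[of _ 0]) (simp add: add_subgroup_def)
  fix h1 k1 h2 k2 assume "h1 \<in> H" "h2 \<in> H"
  then show "\<exists>h k. h1 + of_int k1 * x + (h2 + of_int k2 * x) = h + of_int k * x \<and> h \<in> H"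
    using H by (intro exI[of _ "h1 + h2"] exI[of _ "k1 + k2"]) (auto simp: add_subgroup_def algebra_simps)
next
  fix h k assume "h \<in> H"
  then show "\<exists>h' k'. - (h + of_int k * x) = h' + of_int k' * x \<and> h' \<in> H"
    using H by (intro exI[of _ "- h"] exI[of _ "- k"]) (auto simp: add_subgroup_def)
qed

lemma add_subgroup_of_int_diff_mem:
  assumes H: "add_subgroup H" "1 \<notin> H"
    and diff: "of_int m1 - of_int m2 \<in> (H :: 'a::{field,finite} set)"
  shows "int CHAR('a) dvd m1 - m2"
proof (rule ccontr)
  assume "\<not> int CHAR('a) dvd m1 - m2"
  then have "(of_int (m1 - m2) :: 'a) \<noteq> 0"
    by (metis of_int_eq_0_iff_char_dvd)
  then obtain m' where "of_int m' * (of_int (m1 - m2) :: 'a) = 1"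
    using finite_field_of_int_inverse by blast
  moreover have "of_int m' * (of_int (m1 - m2) :: 'a) \<in> H"
    using add_subgroup_of_int_mult[OF H(1) diff] by simp
  ultimately show False using H(2) by simp
qed

lemma maximal_add_subgroup_exists:
  obtains H :: "'a::{field,finite} set"
  where "add_subgroup H" "1 \<notin> H" "\<And>H'. add_subgroup H' \<Longrightarrow> 1 \<notin> H' \<Longrightarrow> H \<subseteq> H' \<Longrightarrow> H' = H"
proof -
  let ?A = "{H :: 'a set. add_subgroup H \<and> 1 \<notin> H}"
  have "finite ?A" and "{0} \<in> ?A"
    by (simp_all add: add_subgroup_def)
  then obtain H where "H \<in> ?A" and "\<forall>H'\<in>?A. H \<subseteq> H' \<longrightarrow> H = H'"
    using finite_has_maximal by blast
  then show ?thesis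
    by (intro that) auto
qed

lemma maximal_add_subgroup_covers:
  fixes H :: "'a::{field,finite} set"
  assumes H: "add_subgroup H" "1 \<notin> H"
    and maximal: "\<And>H'. add_subgroup H' \<Longrightarrow> 1 \<notin> H' \<Longrightarrow> H \<subseteq> H' \<Longrightarrow> H' = H"
  shows "\<exists>m. x - of_int m \<in> H"
proof (cases "x \<in> H")
  case True
  then show ?thesis by (intro exI[of _ 0]) simp
next
  case False
  define H' where "H' = {h + of_int k * x | h k. h \<in> H}"
  have "add_subgroup H'"
    unfolding H'_def using H(1) by (rule add_subgroup_extend)
  moreover have "H \<subseteq> H'"
    unfolding H'_def by (force intro: exI[of _ 0])
  moreover have "x \<in> H'"
    unfolding H'_def using H by (intro CollectI exI[of _ 0] exI[of _ 1]) (simp add: add_subgroup_def)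
  ultimately have "1 \<in> H'"
    using maximal False by blast
  then obtain h k where hk: "1 = h + of_int k * x" "h \<in> H"
    unfolding H'_def by blast
  have "(of_int k :: 'a) \<noteq> 0"
  proof
    assume "(of_int k :: 'a) = 0"
    with hk have "1 \<in> H" by simp
    with H(2) show False ..
  qed
  then obtain k' where k': "of_int k' * (of_int k :: 'a) = 1"
    using finite_field_of_int_inverse by blast
  have "of_int k' = of_int k' * h + x"
    using hk(1) k' by (metis distrib_left mult.assoc mult.left_neutral mult.right_neutral)
  then have "x - of_int k' = - (of_int k' * h)"
    by (metis add_diff_cancel_right' minus_diff_eq)
  also have "\<dots> \<in> H"
    using H(1) add_subgroup_of_int_mult[OF H(1) hk(2)] by (simp add: add_subgroup_def)
  finally show ?thesis ..
qed

locale additive_character =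
  fixes psi :: "'a::{field,finite} \<Rightarrow> complex"
  assumes psi_add: "psi (x + y) = psi x * psi y"
    and norm_psi [simp]: "norm (psi x) = 1"
    and psi_nontrivial: "\<exists>x. psi x \<noteq> 1"

lemma additive_character_exists: "\<exists>psi :: 'a::{field,finite} \<Rightarrow> complex. additive_character psi"
proof -
  \<comment> \<open>\<open>H\<close> has index \<open>p\<close>: each \<open>x\<close> is congruent modulo \<open>H\<close> to an integer \<open>m x\<close>, unique modulo \<open>p\<close>,
    so \<open>x \<mapsto> m x mod p\<close> is an additive map onto \<open>\<int>/p\<close>.\<close>
  obtain H :: "'a set" where H: "add_subgroup H" "1 \<notin> H"
    and maximal: "\<And>H'. add_subgroup H' \<Longrightarrow> 1 \<notin> H' \<Longrightarrow> H \<subseteq> H' \<Longrightarrow> H' = H"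
    using maximal_add_subgroup_exists[where 'a = 'a] by blast
  define p where "p = CHAR('a)"
  have p: "p > 0"
    unfolding p_def by (rule finite_imp_CHAR_pos) simp
  define m where "m x = (SOME m. x - of_int m \<in> H)" for x
  have m: "x - of_int (m x) \<in> H" for x
    unfolding m_def using maximal_add_subgroup_covers[OF H maximal] by (rule someI_ex)
  have m_add: "int p dvd m (x + y) - (m x + m y)" for x y
  proof -
    have "(x + y) - of_int (m x + m y) \<in> H"
      using m[of x] m[of y] H(1) unfolding add_subgroup_def by (metis add_diff_add of_int_add)
    from add_subgroup_diff[OF H(1) this m[of "x + y"]]
    have "of_int (m (x + y)) - of_int (m x + m y) \<in> H"
      by (simp add: algebra_simps)
    then show ?thesis
      unfolding p_def by (rule add_subgroup_of_int_diff_mem[OF H])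
  qed
  have m_1: "\<not> int p dvd m 1"
  proof
    assume "int p dvd m 1"
    then have "(of_int (m 1) :: 'a) = 0"
      by (simp add: p_def of_int_eq_0_iff_char_dvd)
    with m[of 1] H(2) show False by simp
  qed
  have "additive_character (\<lambda>x. unity_root p (m x))"
  proof
    show "unity_root p (m (x + y)) = unity_root p (m x) * unity_root p (m y)" for x y
      using m_add[of x y] p by (simp add: unity_root_eq_iff flip: unity_root_add)
    show "\<exists>x. unity_root p (m x) \<noteq> 1"
      using m_1 p by (auto simp: unity_root_eq_1_iff)
  qed simp
  then show ?thesis by blast
qed

lemma sum_nonzero_mult_hom_eq_0:
  fixes lam :: "'a::{field,finite} \<Rightarrow> complex"
  assumes lam_mult: "\<And>x y. x \<noteq> 0 \<Longrightarrow> y \<noteq> 0 \<Longrightarrow> lam (x * y) = lam x * lam y"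
    and "s \<noteq> 0" "lam s \<noteq> 1"
  shows "(\<Sum>x\<in>UNIV - {0}. lam x) = 0"
proof -
  have "(\<Sum>x\<in>UNIV - {0}. lam x) = (\<Sum>x\<in>UNIV - {0}. lam (s * x))"
    by (rule sum.reindex_bij_witness[of _ "\<lambda>x. s * x" "\<lambda>x. x / s"]) (use assms in auto)
  also have "\<dots> = lam s * (\<Sum>x\<in>UNIV - {0}. lam x)"
    by (simp add: sum_distrib_left lam_mult assms)
  finally have "(1 - lam s) * (\<Sum>x\<in>UNIV - {0}. lam x) = 0"
    by (simp add: algebra_simps)
  then show ?thesis
    using assms by simp
qed

context additive_character
begin

lemma psi_0 [simp]: "psi 0 = 1"
proof -
  have "psi 0 * psi 0 = psi 0 * 1"
    by (metis add_0 psi_add mult_1_right)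
  moreover have "psi 0 \<noteq> 0"
    by (metis norm_psi norm_zero zero_neq_one)
  ultimately show ?thesis
    by (metis mult_left_cancel)
qed

lemma psi_uminus: "psi (- x) = cnj (psi x)"
proof -
  have "psi x * psi (- x) = 1"
    by (metis psi_0 psi_add add.right_inverse)
  then show ?thesis
    by (rule unimodular_inverse_eq_cnj[OF norm_psi])
qed

lemma psi_sum: "psi (\<Sum>i\<in>A. f i) = (\<Prod>i\<in>A. psi (f i))"
  by (induction A rule: infinite_finite_induct) (simp_all add: psi_add)

lemma sum_psi_mult: "(\<Sum>x\<in>UNIV. psi (c * x)) = (if c = 0 then of_nat CARD('a) else 0)"
proof (cases "c = 0")
  case False
  obtain s where s: "psi s \<noteq> 1"
    using psi_nontrivial by blast
  have "(\<Sum>x\<in>UNIV. psi (c * x)) = (\<Sum>x\<in>UNIV. psi (c * (x + s / c)))"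
    by (rule sum.reindex_bij_witness[of _ "\<lambda>x. x + s / c" "\<lambda>x. x - s / c"]) auto
  also have "\<dots> = psi s * (\<Sum>x\<in>UNIV. psi (c * x))"
    using False by (simp add: sum_distrib_left distrib_left psi_add mult.commute)
  finally have "(1 - psi s) * (\<Sum>x\<in>UNIV. psi (c * x)) = 0"
    by (simp add: algebra_simps)
  with s False show ?thesis
    by simp
qed simp

lemma sum_nonzero_psi_mult:
  "(\<Sum>x\<in>UNIV - {0}. psi (c * x)) = (if c = 0 then of_nat CARD('a) - 1 else - 1)"
proof -
  have "(\<Sum>x\<in>UNIV. psi (c * x)) = psi (c * 0) + (\<Sum>x\<in>UNIV - {0}. psi (c * x))"
    by (rule sum.remove) simp_all
  then have "(\<Sum>x\<in>UNIV - {0}. psi (c * x)) = (\<Sum>x\<in>UNIV. psi (c * x)) - 1"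
    by simp
  then show ?thesis
    by (simp add: sum_psi_mult)
qed

lemma gauss_sum_mult_cnj_eq:
  fixes lam :: "'a \<Rightarrow> complex" and c :: 'a
  assumes lam_mult: "\<And>x y. x \<noteq> 0 \<Longrightarrow> y \<noteq> 0 \<Longrightarrow> lam (x * y) = lam x * lam y"
    and unimodular: "\<And>x. x \<noteq> 0 \<Longrightarrow> norm (lam x) = 1"
  defines "T \<equiv> \<Sum>t\<in>UNIV - {0}. lam t * psi (c * t)"
  shows "T * cnj T = (\<Sum>s\<in>UNIV - {0}. lam s * (\<Sum>y\<in>UNIV - {0}. psi (c * (s - 1) * y)))"
proof -
  let ?U = "UNIV - {0::'a}"
  have "T * cnj T = (\<Sum>x\<in>?U. \<Sum>y\<in>?U. lam x * psi (c * x) * cnj (lam y * psi (c * y)))"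
    unfolding T_def by (simp add: sum_product)
  also have "\<dots> = (\<Sum>y\<in>?U. \<Sum>x\<in>?U. lam x * cnj (lam y) * psi (c * (x - y)))"
  proof -
    have "psi (c * (x - y)) = psi (c * x) * cnj (psi (c * y))" for x y
      by (simp only: diff_conv_add_uminus distrib_left mult_minus_right psi_add psi_uminus)
    then show ?thesis
      by (subst sum.swap) (simp add: mult_ac)
  qed
  also have "\<dots> = (\<Sum>y\<in>?U. \<Sum>s\<in>?U. lam s * psi (c * (s - 1) * y))"
  proof (rule sum.cong[OF refl])
    fix y assume y: "y \<in> ?U"
    have "(\<Sum>x\<in>?U. lam x * cnj (lam y) * psi (c * (x - y)))
        = (\<Sum>s\<in>?U. lam (s * y) * cnj (lam y) * psi (c * (s * y - y)))"
      by (rule sum.reindex_bij_witness[of _ "\<lambda>x. x * y" "\<lambda>x. x / y"]) (use y in auto)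
    also have "\<dots> = (\<Sum>s\<in>?U. lam s * psi (c * (s - 1) * y))"
    proof (rule sum.cong[OF refl])
      fix s assume s: "s \<in> ?U"
      have "lam (s * y) * cnj (lam y) = lam s * (lam y * cnj (lam y))"
        using s y by (simp add: lam_mult)
      also have "\<dots> = lam s"
        using unimodular_mult_cnj[OF unimodular] y by simp
      finally show "lam (s * y) * cnj (lam y) * psi (c * (s * y - y)) = lam s * psi (c * (s - 1) * y)"
        by (simp add: algebra_simps)
    qed
    finally show "(\<Sum>x\<in>?U. lam x * cnj (lam y) * psi (c * (x - y))) = \<dots>" .
  qed
  also have "\<dots> = (\<Sum>s\<in>?U. lam s * (\<Sum>y\<in>?U. psi (c * (s - 1) * y)))"
    by (subst sum.swap) (simp add: sum_distrib_left)
  finally show ?thesis .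
qed

lemma gauss_sum_mult_cnj:
  fixes lam :: "'a \<Rightarrow> complex"
  assumes lam_mult: "\<And>x y. x \<noteq> 0 \<Longrightarrow> y \<noteq> 0 \<Longrightarrow> lam (x * y) = lam x * lam y"
    and unimodular: "\<And>x. x \<noteq> 0 \<Longrightarrow> norm (lam x) = 1"
    and c: "c \<noteq> 0"
  defines "T \<equiv> \<Sum>t\<in>UNIV - {0}. lam t * psi (c * t)"
  shows "T * cnj T = of_nat CARD('a) - (\<Sum>s\<in>UNIV - {0}. lam s)"
proof -
  let ?U = "UNIV - {0::'a}"
  have "lam (1 * 1) = lam 1 * lam 1"
    by (rule lam_mult) simp_all
  then have "lam 1 * lam 1 = lam 1 * 1"
    unfolding mult_1_right ..
  moreover have "lam 1 \<noteq> 0"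
    using unimodular[of 1] by auto
  ultimately have lam_1: "lam 1 = 1"
    by (metis mult_left_cancel)
  have "T * cnj T = (\<Sum>s\<in>?U. lam s * (\<Sum>y\<in>?U. psi (c * (s - 1) * y)))"
    unfolding T_def by (rule gauss_sum_mult_cnj_eq[OF lam_mult unimodular])
  also have "\<dots> = (\<Sum>s\<in>?U. lam s * (if s = 1 then of_nat CARD('a) - 1 else - 1))"
    using c by (intro sum.cong refl) (simp add: sum_nonzero_psi_mult)
  also have "\<dots> = (\<Sum>s\<in>?U. (if s = 1 then of_nat CARD('a) else 0) - lam s)"
    by (intro sum.cong refl) (auto simp: lam_1 algebra_simps)
  also have "\<dots> = of_nat CARD('a) - (\<Sum>s\<in>?U. lam s)"
    by (simp add: sum_subtractf sum.If_cases Int_def)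
  finally show ?thesis .
qed

lemma norm_gauss_sum_le:
  fixes lam :: "'a \<Rightarrow> complex"
  assumes lam_mult: "\<And>x y. x \<noteq> 0 \<Longrightarrow> y \<noteq> 0 \<Longrightarrow> lam (x * y) = lam x * lam y"
    and unimodular: "\<And>x. x \<noteq> 0 \<Longrightarrow> norm (lam x) = 1"
    and c: "c \<noteq> 0"
  shows "norm (\<Sum>t\<in>UNIV - {0}. lam t * psi (c * t)) \<le> sqrt (CARD('a))"
proof -
  let ?T = "\<Sum>t\<in>UNIV - {0}. lam t * psi (c * t)"
  let ?S = "\<Sum>s\<in>UNIV - {0::'a}. lam s"
  have T: "complex_of_real (norm ?T ^ 2) = of_nat CARD('a) - ?S"
    unfolding complex_norm_square by (rule gauss_sum_mult_cnj[OF lam_mult unimodular c])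
  have "?S = 0 \<or> ?S = of_nat CARD('a) - 1"
  proof (cases "\<exists>s. s \<noteq> 0 \<and> lam s \<noteq> 1")
    case True
    then obtain s where "s \<noteq> 0" "lam s \<noteq> 1"
      by blast
    then have "?S = 0"
      using sum_nonzero_mult_hom_eq_0[of lam] lam_mult by blast
    then show ?thesis ..
  next
    case False
    then have "?S = (\<Sum>s\<in>UNIV - {0::'a}. 1)"
      by (intro sum.cong) auto
    then show ?thesis
      using card_field_ge_2[where 'a = 'a] by (simp add: card_Diff_singleton of_nat_diff)
  qed
  then have "complex_of_real (norm ?T ^ 2) = complex_of_real (real CARD('a))
      \<or> complex_of_real (norm ?T ^ 2) = complex_of_real 1"
    unfolding T by auto
  then have "norm ?T ^ 2 \<le> real CARD('a)"
    using card_field_ge_2[where 'a = 'a] by (auto simp only: of_real_eq_iff)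
  then show ?thesis
    by (simp add: real_le_rsqrt)
qed

lemma card_solutions_char_sum:
  assumes I: "finite I"
  shows "of_nat (card {x \<in> I \<rightarrow>\<^sub>E (UNIV - {0}). (\<Sum>i\<in>I. a i * x i ^ d i) = b}) * of_nat CARD('a)
    = (\<Sum>t\<in>UNIV. psi (- (t * b)) * (\<Prod>i\<in>I. \<Sum>x\<in>UNIV - {0}. psi (t * a i * x ^ d i)))"
proof -
  let ?P = "I \<rightarrow>\<^sub>E (UNIV - {0::'a})"
  let ?F = "\<lambda>x. \<Sum>i\<in>I. a i * x i ^ d i"
  have P: "finite ?P"
    using I by (intro finite_PiE) auto
  have "of_nat (card {x \<in> ?P. ?F x = b}) * of_nat CARD('a)
      = (\<Sum>x\<in>?P. of_bool (?F x = b) * of_nat CARD('a) :: complex)"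
    using P by (simp add: sum_distrib_right Int_def flip: sum.inter_filter)
  also have "\<dots> = (\<Sum>x\<in>?P. \<Sum>t\<in>UNIV. psi (- (t * b)) * (\<Prod>i\<in>I. psi (t * a i * x i ^ d i)))"
  proof (rule sum.cong[OF refl])
    fix x
    have "of_bool (?F x = b) * of_nat CARD('a) = (\<Sum>t\<in>UNIV. psi ((?F x - b) * t))"
      by (simp add: sum_psi_mult)
    also have "\<dots> = (\<Sum>t\<in>UNIV. psi (- (t * b)) * (\<Prod>i\<in>I. psi (t * a i * x i ^ d i)))"
    proof (rule sum.cong[OF refl])
      fix t
      have "(?F x - b) * t = - (t * b) + (\<Sum>i\<in>I. t * a i * x i ^ d i)"
        by (simp add: sum_distrib_left sum_distrib_right algebra_simps)
      then show "psi ((?F x - b) * t) = psi (- (t * b)) * (\<Prod>i\<in>I. psi (t * a i * x i ^ d i))"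
        by (simp only: psi_add psi_sum)
    qed
    finally show "of_bool (?F x = b) * of_nat CARD('a) = \<dots>" .
  qed
  also have "\<dots> = (\<Sum>t\<in>UNIV. psi (- (t * b)) * (\<Sum>x\<in>?P. \<Prod>i\<in>I. psi (t * a i * x i ^ d i)))"
    by (subst sum.swap) (simp add: sum_distrib_left)
  also have "\<dots> = (\<Sum>t\<in>UNIV. psi (- (t * b)) * (\<Prod>i\<in>I. \<Sum>x\<in>UNIV - {0}. psi (t * a i * x ^ d i)))"
    using I by (simp add: prod_sum_PiE)
  finally show ?thesis .
qed

end

locale mult_generator =
  fixes g :: "'a::{field,finite}"
  assumes g_nonzero: "g \<noteq> 0"
    and bij_power: "bij_betw (\<lambda>i. g ^ i) {..<CARD('a) - 1} (UNIV - {0})"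
begin

lemma card_minus_1_pos: "CARD('a) - 1 > 0"
  using card_field_ge_2[where 'a = 'a] by simp

definition dlog :: "'a \<Rightarrow> nat" where
  "dlog x = inv_into {..<CARD('a) - 1} (\<lambda>i. g ^ i) x"

lemma dlog_less: "x \<noteq> 0 \<Longrightarrow> dlog x < CARD('a) - 1"
  unfolding dlog_def using bij_power by (auto simp: bij_betw_def intro: inv_into_into[of x _ "{..<CARD('a) - 1}", simplified])

lemma power_dlog: "x \<noteq> 0 \<Longrightarrow> g ^ dlog x = x"
  unfolding dlog_def using bij_power by (auto simp: bij_betw_def intro: f_inv_into_f)

lemma dlog_power: "dlog (g ^ j) = j mod (CARD('a) - 1)"
proof -
  have "dlog (g ^ (j mod (CARD('a) - 1))) = j mod (CARD('a) - 1)"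
    unfolding dlog_def using bij_power card_minus_1_pos
    by (intro inv_into_f_f) (auto simp: bij_betw_def)
  then show ?thesis
    by (simp only: finite_field_power_mod[OF g_nonzero])
qed

text \<open>\<open>mult_char k 0\<close> is a junk value; all character sums below range over \<open>UNIV - {0}\<close>.\<close>

definition mult_char :: "nat \<Rightarrow> 'a \<Rightarrow> complex" where
  "mult_char k x = unity_root (CARD('a) - 1) (int k * int (dlog x))"

lemma norm_mult_char [simp]: "norm (mult_char k x) = 1"
  by (simp add: mult_char_def)

lemma mult_char_0 [simp]: "mult_char 0 x = 1"
  by (simp add: mult_char_def)

lemma mult_char_gen_power: "mult_char k (g ^ j) = unity_root (CARD('a) - 1) (int k * int j)"
proof -
  have "int k * int (j mod (CARD('a) - 1)) mod int (CARD('a) - 1) = int k * int j mod int (CARD('a) - 1)"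
    by (simp add: zmod_int mod_mult_right_eq)
  then show ?thesis
    unfolding mult_char_def dlog_power using card_minus_1_pos
    by (simp add: unity_root_eq_iff mod_eq_dvd_iff)
qed

lemma mult_char_mult:
  assumes "x \<noteq> 0" "y \<noteq> 0"
  shows "mult_char k (x * y) = mult_char k x * mult_char k y"
proof -
  have "x * y = g ^ (dlog x + dlog y)"
    using assms by (simp add: power_add power_dlog)
  then show ?thesis
    using power_dlog[OF assms(1)] power_dlog[OF assms(2)]
    by (metis mult_char_gen_power of_nat_add distrib_left unity_root_add)
qed

lemma mult_char_power:
  assumes "x \<noteq> 0"
  shows "mult_char k (x ^ d) = mult_char k x ^ d"
proof -
  have "mult_char k (x ^ d) = mult_char k (g ^ (dlog x * d))"
    by (simp only: power_mult power_dlog[OF assms])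
  also have "\<dots> = unity_root (CARD('a) - 1) (int d * (int k * int (dlog x)))"
    by (simp add: mult_char_gen_power mult_ac)
  also have "\<dots> = mult_char k x ^ d"
    by (simp only: unity_root_mult_of_nat mult_char_def)
  finally show ?thesis .
qed

lemma mult_char_inverse:
  assumes "y \<noteq> 0"
  shows "mult_char k (inverse y) = cnj (mult_char k y)"
proof -
  have "mult_char k 1 = 1"
    using mult_char_gen_power[of k 0] by simp
  then have "mult_char k y * mult_char k (inverse y) = 1"
    using assms by (simp flip: mult_char_mult)
  then show ?thesis
    by (rule unimodular_inverse_eq_cnj[OF norm_mult_char])
qed

lemma sum_mult_char_power:
  "(\<Sum>x\<in>UNIV - {0}. mult_char k x ^ d)
     = (if CARD('a) - 1 dvd k * d then of_nat (CARD('a) - 1) else 0)"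
proof -
  have "(\<Sum>x\<in>UNIV - {0}. mult_char k x ^ d) = (\<Sum>j<CARD('a) - 1. mult_char k (g ^ j) ^ d)"
    by (rule sum.reindex_bij_betw[OF bij_power, symmetric])
  also have "\<dots> = (\<Sum>j<CARD('a) - 1. unity_root (CARD('a) - 1) (int (k * d) * int j))"
    by (simp add: mult_char_gen_power mult_ac flip: unity_root_mult_of_nat)
  also have "\<dots> = (if CARD('a) - 1 dvd k * d then of_nat (CARD('a) - 1) else 0)"
    using sum_unity_root[OF card_minus_1_pos, of "int (k * d)"] unfolding int_dvd_int_iff .
  finally show ?thesis .
qed

lemma sum_mult_char_index:
  assumes "z \<noteq> 0"
  shows "(\<Sum>k<CARD('a) - 1. mult_char k z) = (if z = 1 then of_nat (CARD('a) - 1) else 0)"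
proof -
  have "CARD('a) - 1 dvd dlog z \<longleftrightarrow> dlog z = 0"
    using dlog_less[OF assms] by (auto elim: dvdE)
  also have "\<dots> \<longleftrightarrow> z = 1"
    using power_dlog[OF assms] dlog_power[of 0] by auto
  finally have "CARD('a) - 1 dvd dlog z \<longleftrightarrow> z = 1" .
  moreover have "(\<Sum>k<CARD('a) - 1. mult_char k z)
      = (\<Sum>k<CARD('a) - 1. unity_root (CARD('a) - 1) (int (dlog z) * int k))"
    by (simp add: mult_char_def mult.commute)
  ultimately show ?thesis
    using sum_unity_root[OF card_minus_1_pos, of "int (dlog z)"] unfolding int_dvd_int_iff by simp
qed

text \<open>The indices \<open>k\<close> of the characters with \<open>(mult_char k)\<^sup>d\<close> trivial on \<open>UNIV - {0}\<close>.\<close>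

definition power_chars :: "nat \<Rightarrow> nat set" where
  "power_chars d = {k \<in> {..<CARD('a) - 1}. CARD('a) - 1 dvd k * d}"

lemma finite_power_chars [simp]: "finite (power_chars d)"
  by (simp add: power_chars_def)

lemma zero_mem_power_chars: "0 \<in> power_chars d"
  using card_minus_1_pos by (simp add: power_chars_def)

lemma card_power_chars_le:
  assumes "d > 0"
  shows "card (power_chars d) \<le> d"
proof -
  let ?Q = "CARD('a) - 1"
  have "inj_on (\<lambda>k. k * d div ?Q) (power_chars d)"
  proof (rule inj_onI)
    fix k l assume "k \<in> power_chars d" "l \<in> power_chars d" "k * d div ?Q = l * d div ?Q"
    then have "k * d = l * d"
      unfolding power_chars_def by (metis dvd_div_mult_self mem_Collect_eq)
    then show "k = l"
      using assms by simp
  qed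
  moreover have "(\<lambda>k. k * d div ?Q) ` power_chars d \<subseteq> {..<d}"
  proof
    fix j assume "j \<in> (\<lambda>k. k * d div ?Q) ` power_chars d"
    then obtain k where "k < ?Q" "j = k * d div ?Q"
      by (auto simp: power_chars_def)
    then show "j \<in> {..<d}"
      using assms by (simp add: div_less_iff_less_mult mult.commute)
  qed
  ultimately show ?thesis
    using card_inj_on_le[of _ "power_chars d" "{..<d}"] by simp
qed

lemma card_nontrivial_power_chars_le:
  assumes "d > 0"
  shows "card (power_chars d - {0}) \<le> d - 1"
  using card_power_chars_le[OF assms] zero_mem_power_chars[of d] by simp

lemma card_power_fiber:
  assumes d: "d > 0" and y: "y \<noteq> 0"
  shows "of_nat (card {x. x \<noteq> 0 \<and> x ^ d = y}) = (\<Sum>k\<in>power_chars d. cnj (mult_char k y))"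
proof -
  let ?Q = "CARD('a) - 1"
  have indicator: "of_bool (x ^ d = y)
      = (1 / of_nat ?Q) * (\<Sum>k<?Q. cnj (mult_char k y) * mult_char k x ^ d)" if x: "x \<noteq> 0" for x
  proof -
    have "(\<Sum>k<?Q. cnj (mult_char k y) * mult_char k x ^ d) = (\<Sum>k<?Q. mult_char k (x ^ d * inverse y))"
      using x y by (simp add: mult_char_mult mult_char_power mult_char_inverse mult.commute)
    also have "\<dots> = (if x ^ d * inverse y = 1 then of_nat ?Q else 0)"
      using x y by (intro sum_mult_char_index) simp
    finally show ?thesis
      using card_minus_1_pos y by (auto simp: field_simps)
  qed
  have "of_nat (card {x. x \<noteq> 0 \<and> x ^ d = y}) = (\<Sum>x\<in>UNIV - {0}. of_bool (x ^ d = y) :: complex)"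
    by (simp add: Int_def flip: sum.inter_filter Diff_eq)
  also have "\<dots> = (1 / of_nat ?Q) * (\<Sum>x\<in>UNIV - {0}. \<Sum>k<?Q. cnj (mult_char k y) * mult_char k x ^ d)"
    by (simp add: indicator sum_distrib_left)
  also have "\<dots> = (1 / of_nat ?Q) * (\<Sum>k<?Q. cnj (mult_char k y) * (\<Sum>x\<in>UNIV - {0}. mult_char k x ^ d))"
    by (subst sum.swap) (simp only: sum_distrib_left)
  also have "\<dots> = (1 / of_nat ?Q) * (\<Sum>k<?Q. of_nat ?Q * (if ?Q dvd k * d then cnj (mult_char k y) else 0))"
    by (intro arg_cong[where f = "\<lambda>s. _ * s"] sum.cong) (simp_all add: sum_mult_char_power)
  also have "\<dots> = (\<Sum>k<?Q. if ?Q dvd k * d then cnj (mult_char k y) else 0)"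
    using card_minus_1_pos by (simp flip: sum_distrib_left)
  also have "\<dots> = (\<Sum>k\<in>power_chars d. cnj (mult_char k y))"
    unfolding power_chars_def by (rule sum.inter_filter[symmetric]) simp
  finally show ?thesis .
qed

end

lemma mult_generator_exists: "\<exists>g::'a::{field,finite}. mult_generator g"
proof -
  let ?Q = "CARD('a) - 1"
  obtain g :: 'a where g: "g \<noteq> 0" and gen: "\<And>x. x \<noteq> 0 \<Longrightarrow> \<exists>i. x = g ^ i"
    using finite_field_cyclic by blast
  have "(\<lambda>i. g ^ i) ` {..<?Q} = UNIV - {0}"
  proof
    show "(\<lambda>i. g ^ i) ` {..<?Q} \<subseteq> UNIV - {0}"
      using g by auto
    show "UNIV - {0} \<subseteq> (\<lambda>i. g ^ i) ` {..<?Q}"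
    proof
      fix x :: 'a assume "x \<in> UNIV - {0}"
      then obtain i where "x = g ^ i"
        using gen by blast
      then have "x = g ^ (i mod ?Q)"
        by (simp only: finite_field_power_mod[OF g])
      then show "x \<in> (\<lambda>i. g ^ i) ` {..<?Q}"
        using card_field_ge_2[where 'a = 'a] by auto
    qed
  qed
  moreover have "card (UNIV - {0::'a}) = ?Q"
    by (simp add: card_Diff_singleton)
  ultimately have "bij_betw (\<lambda>i. g ^ i) {..<?Q} (UNIV - {0})"
    by (simp add: bij_betw_def eq_card_imp_inj_on)
  with g show ?thesis
    unfolding mult_generator_def by blast
qed

locale field_characters = additive_character psi + mult_generator g
  for psi :: "'a::{field,finite} \<Rightarrow> complex" and g :: 'a
begin

definition gauss_sum :: "nat \<Rightarrow> 'a \<Rightarrow> complex" where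
  "gauss_sum k c = (\<Sum>y\<in>UNIV - {0}. cnj (mult_char k y) * psi (c * y))"

lemma gauss_sum_0: "c \<noteq> 0 \<Longrightarrow> gauss_sum 0 c = - 1"
  by (simp add: gauss_sum_def sum_nonzero_psi_mult)

lemma gauss_sum_scale:
  assumes c: "c \<noteq> 0"
  shows "gauss_sum k c = mult_char k c * gauss_sum k 1"
proof -
  have "gauss_sum k c = (\<Sum>z\<in>UNIV - {0::'a}. cnj (mult_char k (z / c)) * psi z)"
    unfolding gauss_sum_def
    by (rule sum.reindex_bij_witness[of _ "\<lambda>y. y / c" "\<lambda>y. c * y"]) (use c in auto)
  also have "\<dots> = (\<Sum>z\<in>UNIV - {0::'a}. mult_char k c * (cnj (mult_char k z) * psi (1 * z)))"
  proof (rule sum.cong[OF refl])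
    fix z :: 'a assume z: "z \<in> UNIV - {0}"
    have "mult_char k (z / c) = mult_char k z * cnj (mult_char k c)"
      using z c by (simp add: divide_inverse mult_char_mult mult_char_inverse)
    moreover have "mult_char k c * cnj (mult_char k c) = 1"
      by (simp add: unimodular_mult_cnj)
    ultimately show "cnj (mult_char k (z / c)) * psi z = mult_char k c * (cnj (mult_char k z) * psi (1 * z))"
      by (simp add: mult_ac)
  qed
  also have "\<dots> = mult_char k c * gauss_sum k 1"
    by (simp add: gauss_sum_def sum_distrib_left)
  finally show ?thesis .
qed

lemma sum_psi_power:
  assumes d: "d > 0"
  shows "(\<Sum>x\<in>UNIV - {0}. psi (c * x ^ d)) = (\<Sum>k\<in>power_chars d. gauss_sum k c)"
proof -
  let ?U = "UNIV - {0::'a}"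
  have "(\<Sum>x\<in>?U. psi (c * x ^ d)) = (\<Sum>y\<in>?U. \<Sum>x\<in>{x \<in> ?U. x ^ d = y}. psi (c * x ^ d))"
    by (rule sum.group[symmetric]) auto
  also have "\<dots> = (\<Sum>y\<in>?U. of_nat (card {x. x \<noteq> 0 \<and> x ^ d = y}) * psi (c * y))"
  proof (rule sum.cong[OF refl])
    fix y assume "y \<in> ?U"
    have "(\<Sum>x\<in>{x \<in> ?U. x ^ d = y}. psi (c * x ^ d)) = (\<Sum>x\<in>{x. x \<noteq> 0 \<and> x ^ d = y}. psi (c * y))"
      by (intro sum.cong) auto
    then show "(\<Sum>x\<in>{x \<in> ?U. x ^ d = y}. psi (c * x ^ d)) = of_nat (card {x. x \<noteq> 0 \<and> x ^ d = y}) * psi (c * y)"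
      by simp
  qed
  also have "\<dots> = (\<Sum>y\<in>?U. \<Sum>k\<in>power_chars d. cnj (mult_char k y) * psi (c * y))"
    using d by (intro sum.cong refl) (simp add: card_power_fiber sum_distrib_right)
  also have "\<dots> = (\<Sum>k\<in>power_chars d. gauss_sum k c)"
    unfolding gauss_sum_def by (rule sum.swap)
  finally show ?thesis .
qed

definition reduced_sum :: "nat \<Rightarrow> 'a \<Rightarrow> complex" where
  "reduced_sum d c = (\<Sum>k\<in>power_chars d - {0}. gauss_sum k c)"

lemma sum_psi_power_nonzero:
  assumes "d > 0" "c \<noteq> 0"
  shows "(\<Sum>x\<in>UNIV - {0}. psi (c * x ^ d)) = reduced_sum d c - 1"
  using assms
  by (simp add: sum_psi_power reduced_sum_def sum.remove[OF finite_power_chars zero_mem_power_chars] gauss_sum_0)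

definition error_term :: "('i \<Rightarrow> nat) \<Rightarrow> ('i \<Rightarrow> 'a) \<Rightarrow> 'a \<Rightarrow> 'i set \<Rightarrow> complex" where
  "error_term d a b S = (\<Sum>t\<in>UNIV - {0}. psi (- (t * b)) * (\<Prod>i\<in>S. reduced_sum (d i) (t * a i)))"

lemma card_solutions_eq:
  assumes I: "finite I"
    and d: "\<And>i. i \<in> I \<Longrightarrow> d i > 0" and a: "\<And>i. i \<in> I \<Longrightarrow> a i \<noteq> 0" and b: "b \<noteq> 0"
  shows "of_nat (card {x \<in> I \<rightarrow>\<^sub>E (UNIV - {0}). (\<Sum>i\<in>I. a i * x i ^ d i) = b}) * of_nat CARD('a)
    = (of_nat CARD('a) - 1) ^ card I - (- 1) ^ card I
      + (\<Sum>S\<in>Pow I - {{}}. (- 1) ^ card (I - S) * error_term d a b S)"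
proof -
  let ?U = "UNIV - {0::'a}"
  let ?f = "\<lambda>t. psi (- (t * b)) * (\<Prod>i\<in>I. \<Sum>x\<in>?U. psi (t * a i * x ^ d i))"
  have "of_nat (card {x \<in> I \<rightarrow>\<^sub>E ?U. (\<Sum>i\<in>I. a i * x i ^ d i) = b}) * of_nat CARD('a) = (\<Sum>t\<in>UNIV. ?f t)"
    by (rule card_solutions_char_sum[OF I])
  also have "\<dots> = ?f 0 + (\<Sum>t\<in>?U. ?f t)"
    by (rule sum.remove) simp_all
  also have "?f 0 = (of_nat CARD('a) - 1) ^ card I"
    using sum_nonzero_psi_mult[of 0] by simp
  also have "(\<Sum>t\<in>?U. ?f t) = (\<Sum>t\<in>?U. psi (- (t * b)) * (\<Prod>i\<in>I. reduced_sum (d i) (t * a i) + (- 1)))"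
  proof (rule sum.cong[OF refl])
    fix t assume t: "t \<in> ?U"
    have "(\<Sum>x\<in>?U. psi (t * a i * x ^ d i)) = reduced_sum (d i) (t * a i) + (- 1)" if "i \<in> I" for i
      using sum_psi_power_nonzero[of "d i" "t * a i"] d[OF that] a[OF that] t by simp
    then show "?f t = psi (- (t * b)) * (\<Prod>i\<in>I. reduced_sum (d i) (t * a i) + (- 1))"
      by simp
  qed
  also have "\<dots> = (\<Sum>t\<in>?U. \<Sum>S\<in>Pow I. (- 1) ^ card (I - S)
      * (psi (- (t * b)) * (\<Prod>i\<in>S. reduced_sum (d i) (t * a i))))"
    unfolding prod_add[OF I] by (intro sum.cong refl) (simp add: sum_distrib_left mult_ac)
  also have "\<dots> = (\<Sum>S\<in>Pow I. (- 1) ^ card (I - S) * error_term d a b S)"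
    unfolding error_term_def by (subst sum.swap) (simp add: sum_distrib_left)
  also have "\<dots> = (- 1) ^ card I * error_term d a b {} + (\<Sum>S\<in>Pow I - {{}}. (- 1) ^ card (I - S) * error_term d a b S)"
    using I by (subst sum.remove[of _ "{}"]) simp_all
  also have "error_term d a b {} = - 1"
    using b sum_nonzero_psi_mult[of "- b"] by (simp add: error_term_def mult.commute)
  finally show ?thesis
    by simp
qed

lemma error_term_expand:
  assumes S: "finite S" and a: "\<And>i. i \<in> S \<Longrightarrow> a i \<noteq> 0"
  shows "error_term d a b S = (\<Sum>\<kappa>\<in>PiE S (\<lambda>i. power_chars (d i) - {0}).
      (\<Prod>i\<in>S. mult_char (\<kappa> i) (a i) * gauss_sum (\<kappa> i) 1)
      * (\<Sum>t\<in>UNIV - {0}. (\<Prod>i\<in>S. mult_char (\<kappa> i) t) * psi ((- b) * t)))"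
proof -
  let ?U = "UNIV - {0::'a}"
  let ?P = "PiE S (\<lambda>i. power_chars (d i) - {0})"
  have "error_term d a b S = (\<Sum>t\<in>?U. \<Sum>\<kappa>\<in>?P. psi (- (t * b)) * (\<Prod>i\<in>S. gauss_sum (\<kappa> i) (t * a i)))"
    unfolding error_term_def reduced_sum_def
    by (intro sum.cong refl) (simp add: prod_sum_PiE[OF S] sum_distrib_left)
  also have "\<dots> = (\<Sum>\<kappa>\<in>?P. \<Sum>t\<in>?U. psi (- (t * b)) * (\<Prod>i\<in>S. gauss_sum (\<kappa> i) (t * a i)))"
    by (rule sum.swap)
  also have "\<dots> = (\<Sum>\<kappa>\<in>?P. (\<Prod>i\<in>S. mult_char (\<kappa> i) (a i) * gauss_sum (\<kappa> i) 1)
      * (\<Sum>t\<in>?U. (\<Prod>i\<in>S. mult_char (\<kappa> i) t) * psi ((- b) * t)))"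
  proof (intro sum.cong refl)
    fix \<kappa>
    have "(\<Prod>i\<in>S. gauss_sum (\<kappa> i) (t * a i))
        = (\<Prod>i\<in>S. mult_char (\<kappa> i) t) * (\<Prod>i\<in>S. mult_char (\<kappa> i) (a i) * gauss_sum (\<kappa> i) 1)"
      if t: "t \<in> ?U" for t
    proof -
      have "gauss_sum (\<kappa> i) (t * a i) = mult_char (\<kappa> i) t * (mult_char (\<kappa> i) (a i) * gauss_sum (\<kappa> i) 1)"
        if "i \<in> S" for i
        using t a[OF that] by (simp add: gauss_sum_scale[of "t * a i"] mult_char_mult)
      then show ?thesis
        by (simp add: prod.distrib)
    qed
    then show "(\<Sum>t\<in>?U. psi (- (t * b)) * (\<Prod>i\<in>S. gauss_sum (\<kappa> i) (t * a i)))
        = (\<Prod>i\<in>S. mult_char (\<kappa> i) (a i) * gauss_sum (\<kappa> i) 1)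
          * (\<Sum>t\<in>?U. (\<Prod>i\<in>S. mult_char (\<kappa> i) t) * psi ((- b) * t))"
      by (simp add: sum_distrib_left mult_ac)
  qed
  finally show ?thesis .
qed

lemma norm_error_term_summand_le:
  assumes b: "b \<noteq> 0"
  shows "norm ((\<Prod>i\<in>S. mult_char (\<kappa> i) (a i) * gauss_sum (\<kappa> i) 1)
      * (\<Sum>t\<in>UNIV - {0}. (\<Prod>i\<in>S. mult_char (\<kappa> i) t) * psi ((- b) * t)))
    \<le> sqrt (CARD('a)) ^ (card S + 1)"
proof -
  let ?q = "sqrt (CARD('a))"
  have "norm (gauss_sum k 1) \<le> ?q" for k
    unfolding gauss_sum_def by (rule norm_gauss_sum_le) (simp_all add: mult_char_mult)
  then have "norm (\<Prod>i\<in>S. mult_char (\<kappa> i) (a i) * gauss_sum (\<kappa> i) 1) \<le> (\<Prod>i\<in>S. ?q)"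
    unfolding prod_norm[symmetric] by (intro prod_mono) (simp add: norm_mult)
  moreover have "norm (\<Sum>t\<in>UNIV - {0}. (\<Prod>i\<in>S. mult_char (\<kappa> i) t) * psi ((- b) * t)) \<le> ?q"
    using b by (intro norm_gauss_sum_le) (simp_all add: mult_char_mult prod.distrib prod_norm[symmetric])
  ultimately have "norm (\<Prod>i\<in>S. mult_char (\<kappa> i) (a i) * gauss_sum (\<kappa> i) 1)
      * norm (\<Sum>t\<in>UNIV - {0}. (\<Prod>i\<in>S. mult_char (\<kappa> i) t) * psi ((- b) * t)) \<le> ?q ^ card S * ?q"
    by (intro mult_mono) simp_all
  then show ?thesis
    by (simp add: norm_mult mult.commute)
qed

lemma norm_error_term_le:
  assumes S: "finite S" and d: "\<And>i. i \<in> S \<Longrightarrow> d i > 0"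
    and a: "\<And>i. i \<in> S \<Longrightarrow> a i \<noteq> 0" and b: "b \<noteq> 0"
  shows "norm (error_term d a b S) \<le> (\<Prod>i\<in>S. real (d i) - 1) * sqrt (CARD('a)) ^ (card S + 1)"
proof -
  let ?q = "sqrt (CARD('a))"
  let ?P = "PiE S (\<lambda>i. power_chars (d i) - {0})"
  have expand: "error_term d a b S = (\<Sum>\<kappa>\<in>?P. (\<Prod>i\<in>S. mult_char (\<kappa> i) (a i) * gauss_sum (\<kappa> i) 1)
      * (\<Sum>t\<in>UNIV - {0}. (\<Prod>i\<in>S. mult_char (\<kappa> i) t) * psi ((- b) * t)))"
    by (rule error_term_expand[where a = a, OF S a])
  have "norm (error_term d a b S) \<le> (\<Sum>\<kappa>\<in>?P. ?q ^ (card S + 1))"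
    unfolding expand by (rule sum_norm_le) (rule norm_error_term_summand_le[OF b])
  also have "\<dots> = (\<Prod>i\<in>S. real (card (power_chars (d i) - {0}))) * ?q ^ (card S + 1)"
    by (simp add: card_PiE[OF S])
  also have "\<dots> \<le> (\<Prod>i\<in>S. real (d i) - 1) * ?q ^ (card S + 1)"
  proof (intro mult_right_mono prod_mono conjI)
    fix i assume "i \<in> S"
    then have "d i > 0"
      by (rule d)
    then have "real (card (power_chars (d i) - {0})) \<le> real (d i - 1)"
      using card_nontrivial_power_chars_le[of "d i"] by (simp only: of_nat_le_iff)
    also have "\<dots> = real (d i) - 1"
      using \<open>d i > 0\<close> by (simp add: of_nat_diff)
    finally show "real (card (power_chars (d i) - {0})) \<le> real (d i) - 1" .
  qed simp_all
  finally show ?thesis .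
qed

lemma card_solutions_deviation_eq:
  assumes I: "finite I"
    and d: "\<And>i. i \<in> I \<Longrightarrow> d i > 0" and a: "\<And>i. i \<in> I \<Longrightarrow> a i \<noteq> 0" and b: "b \<noteq> 0"
  shows "\<bar>real (card {x \<in> I \<rightarrow>\<^sub>E (UNIV - {0}). (\<Sum>i\<in>I. a i * x i ^ d i) = b})
            - ((real CARD('a) - 1) ^ card I - (- 1) ^ card I) / real CARD('a)\<bar>
    = norm (\<Sum>S\<in>Pow I - {{}}. (- 1) ^ card (I - S) * error_term d a b S) / real CARD('a)"
proof -
  let ?N = "card {x \<in> I \<rightarrow>\<^sub>E (UNIV - {0}). (\<Sum>i\<in>I. a i * x i ^ d i) = b}"
  let ?q = "real CARD('a)"
  let ?R = "\<Sum>S\<in>Pow I - {{}}. (- 1) ^ card (I - S) * error_term d a b S"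
  have "complex_of_real (real ?N - ((?q - 1) ^ card I - (- 1) ^ card I) / ?q) = ?R / of_nat CARD('a)"
    using card_solutions_eq[OF I d a b] by (simp add: field_simps)
  then have "norm (complex_of_real (real ?N - ((?q - 1) ^ card I - (- 1) ^ card I) / ?q))
      = norm (?R / of_nat CARD('a))"
    by (rule arg_cong)
  then show ?thesis
    by (simp only: norm_of_real norm_divide norm_of_nat)
qed

end

lemma card_solutions_deviation_le:
  fixes I :: "'i set" and d :: "'i \<Rightarrow> nat" and a :: "'i \<Rightarrow> 'a::{field,finite}" and b :: 'a
  assumes I: "finite I"
    and d: "\<And>i. i \<in> I \<Longrightarrow> d i > 0" and a: "\<And>i. i \<in> I \<Longrightarrow> a i \<noteq> 0" and b: "b \<noteq> 0"
  shows "\<bar>real (card {x \<in> I \<rightarrow>\<^sub>E (UNIV - {0}). (\<Sum>i\<in>I. a i * x i ^ d i) = b})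
            - ((real CARD('a) - 1) ^ card I - (- 1) ^ card I) / real CARD('a)\<bar>
         \<le> (\<Sum>S\<in>Pow I - {{}}. (\<Prod>i\<in>S. real (d i) - 1) * sqrt (real CARD('a)) ^ (card S - 1))"
proof -
  obtain psi :: "'a \<Rightarrow> complex" where "additive_character psi"
    using additive_character_exists by blast
  moreover obtain g :: 'a where "mult_generator g"
    using mult_generator_exists by blast
  ultimately interpret field_characters psi g
    by (simp add: field_characters_def)
  let ?q = "real CARD('a)"
  have q: "?q > 0"
    by simp
  have "\<bar>real (card {x \<in> I \<rightarrow>\<^sub>E (UNIV - {0}). (\<Sum>i\<in>I. a i * x i ^ d i) = b})
          - ((?q - 1) ^ card I - (- 1) ^ card I) / ?q\<bar>
      = norm (\<Sum>S\<in>Pow I - {{}}. (- 1) ^ card (I - S) * error_term d a b S) / ?q"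
    by (rule card_solutions_deviation_eq[OF I d a b])
  also have "\<dots> \<le> (\<Sum>S\<in>Pow I - {{}}. (\<Prod>i\<in>S. real (d i) - 1) * sqrt ?q ^ (card S + 1)) / ?q"
  proof (intro divide_right_mono order.trans[OF norm_sum] sum_mono)
    fix S assume S: "S \<in> Pow I - {{}}"
    then have "finite S"
      using I finite_subset by blast
    have "norm ((- 1) ^ card (I - S) * error_term d a b S) = norm (error_term d a b S)"
      by (simp add: norm_mult norm_power)
    also have "\<dots> \<le> (\<Prod>i\<in>S. real (d i) - 1) * sqrt ?q ^ (card S + 1)"
      using S d a b by (intro norm_error_term_le \<open>finite S\<close>) (blast+)
    finally show "norm ((- 1) ^ card (I - S) * error_term d a b S) \<le> \<dots>" .
  qed simp
  also have "\<dots> = (\<Sum>S\<in>Pow I - {{}}. (\<Prod>i\<in>S. real (d i) - 1) * sqrt ?q ^ (card S - 1))"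
    unfolding sum_divide_distrib
  proof (rule sum.cong[OF refl])
    fix S assume S: "S \<in> Pow I - {{}}"
    then have "finite S"
      using I by (blast intro: finite_subset)
    with S have "card S + 1 = (card S - 1) + 2"
      by (simp add: card_gt_0_iff)
    then have "sqrt ?q ^ (card S + 1) = sqrt ?q ^ (card S - 1) * ?q"
      by (simp only: power_add) simp
    then show "(\<Prod>i\<in>S. real (d i) - 1) * sqrt ?q ^ (card S + 1) / ?q
        = (\<Prod>i\<in>S. real (d i) - 1) * sqrt ?q ^ (card S - 1)"
      using q by simp
  qed
  finally show ?thesis .
qed

lemma sum_nonempty_subsets_by_card:
  assumes I: "finite I"
  shows "(\<Sum>S\<in>Pow I - {{}}. f S) = (\<Sum>e<card I. \<Sum>S\<in>{S. S \<subseteq> I \<and> card S = card I - e}. f S)"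
proof -
  have card_le: "card S \<le> card I" if "S \<subseteq> I" for S
    using I that by (rule card_mono)
  have card_pos: "card S > 0" if "S \<subseteq> I" "S \<noteq> {}" for S
    using I that by (auto simp: card_gt_0_iff dest: finite_subset)
  have "card I - card S < card I" if "S \<in> Pow I - {{}}" for S
    using card_le[of S] card_pos[of S] that by (simp add: diff_less)
  then have "(\<lambda>S. card I - card S) ` (Pow I - {{}}) \<subseteq> {..<card I}"
    by blast
  then have "(\<Sum>S\<in>Pow I - {{}}. f S) = (\<Sum>e<card I. \<Sum>S\<in>{S \<in> Pow I - {{}}. card I - card S = e}. f S)"
    using I by (intro sum.group[symmetric]) auto
  also have "\<dots> = (\<Sum>e<card I. \<Sum>S\<in>{S. S \<subseteq> I \<and> card S = card I - e}. f S)"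
  proof (intro sum.cong refl arg_cong[where f = "\<lambda>A. sum f A"])
    fix e assume e: "e \<in> {..<card I}"
    have "S \<in> Pow I - {{}} \<and> card I - card S = e \<longleftrightarrow> S \<subseteq> I \<and> card S = card I - e" for S
    proof (cases "S \<subseteq> I")
      case True
      then show ?thesis
        using card_le[OF True] card_pos[OF True] e by auto
    qed simp
    then show "{S \<in> Pow I - {{}}. card I - card S = e} = {S. S \<subseteq> I \<and> card S = card I - e}"
      by blast
  qed
  finally show ?thesis .
qed

theorem mainTheorem7:
  fixes n :: nat and d :: "nat \<Rightarrow> nat" and a :: "nat \<Rightarrow> 'a::{field,finite}" and b :: 'a
  assumes "\<And>i. i \<in> {1..n} \<Longrightarrow> d i > 0"
      and "b \<noteq> 0"
      and "\<And>i. i \<in> {1..n} \<Longrightarrow> a i \<noteq> 0"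
  shows "\<bar>real (Nstar n d a b) - (1 / real (CARD('a))) * ((real (CARD('a)) - 1) ^ n - (-1) ^ n)\<bar>
         \<le> (\<Sum>e<n. \<Sum>S\<in>{S. S \<subseteq> {1..n} \<and> card S = n - e}.
               (\<Prod>i\<in>S. real (d i) - 1) * sqrt (real (CARD('a))) ^ (n - e - 1))"
proof -
  let ?f = "\<lambda>S. (\<Prod>i\<in>S. real (d i) - 1) * sqrt (real CARD('a)) ^ (card S - 1)"
  have "\<bar>real (Nstar n d a b) - (1 / real (CARD('a))) * ((real (CARD('a)) - 1) ^ n - (-1) ^ n)\<bar>
      \<le> (\<Sum>S\<in>Pow {1..n} - {{}}. ?f S)"
    using card_solutions_deviation_le[of "{1..n}" d a b] assms by (simp add: Nstar_def)
  also have "\<dots> = (\<Sum>e<n. \<Sum>S\<in>{S. S \<subseteq> {1..n} \<and> card S = n - e}. ?f S)"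
    using sum_nonempty_subsets_by_card[of "{1..n}" ?f] by simp
  also have "\<dots> = (\<Sum>e<n. \<Sum>S\<in>{S. S \<subseteq> {1..n} \<and> card S = n - e}.
      (\<Prod>i\<in>S. real (d i) - 1) * sqrt (real (CARD('a))) ^ (n - e - 1))"
    by (intro sum.cong refl) simp
  finally show ?thesis .
qed

end
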